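(* Let $\mathbb E$ be a finitely complete category such that, for every object $X$, every internal group in $Pt_X\mathbb E$ has as underlying split epimorphism an isomorphism. Then for every object $X$, every internal reflexive graph on $X$ that admits an internal groupoid structure is a relation on $X$, i.e. it is a subobject of the indiscrete relation $\nabla_X$ in $RGh_X\mathbb E$ (equivalently $(d_0,d_1):X_1\to X\times X$ is a monomorphism).
   Context: $Pt_X\mathbb E$ is the category of split epimorphisms $f:A\to X$ with chosen section $s$, morphisms commuting with $f$ and $s$. An internal reflexive graph on $X$ is $d_0,d_1:X_1\to X$ with $s_0:X\to X_1$, $d_0s_0=1=d_1s_0$; $RGh_X\mathbb E$ is the category of these with morphisms identity on $X$, having terminal object $\nabla_X=(X\times X,p_0,p_1,(1,1))$. An internal groupoid structure on such a graph is an associative unital composition on $X_1\times_XX_1$ with identities $s_0$ and inverses. *)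

theory Defs
  imports Main
begin

text \<open>A category given by its objects, arrows, domain/codomain maps,
  composition (cmp C g f = g after f) and identities.\<close>

record ('o, 'm) cat =
  Obj :: "'o set"
  Arr :: "'m set"
  dom :: "'m \<Rightarrow> 'o"
  cod :: "'m \<Rightarrow> 'o"
  cmp :: "'m \<Rightarrow> 'm \<Rightarrow> 'm"
  idt :: "'o \<Rightarrow> 'm"

definition hom :: "('o, 'm) cat \<Rightarrow> 'm \<Rightarrow> 'o \<Rightarrow> 'o \<Rightarrow> bool" where
  "hom C f a b \<longleftrightarrow> f \<in> Arr C \<and> dom C f = a \<and> cod C f = b"

definition category :: "('o, 'm) cat \<Rightarrow> bool" where
  "category C \<longleftrightarrow>
     (\<forall>f \<in> Arr C. dom C f \<in> Obj C \<and> cod C f \<in> Obj C)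
   \<and> (\<forall>a \<in> Obj C. hom C (idt C a) a a)
   \<and> (\<forall>f g a b c. hom C f a b \<longrightarrow> hom C g b c \<longrightarrow> hom C (cmp C g f) a c)
   \<and> (\<forall>f a b. hom C f a b \<longrightarrow> cmp C (idt C b) f = f \<and> cmp C f (idt C a) = f)
   \<and> (\<forall>f g h a b c d. hom C f a b \<longrightarrow> hom C g b c \<longrightarrow> hom C h c d \<longrightarrow>
        cmp C h (cmp C g f) = cmp C (cmp C h g) f)"

definition is_iso :: "('o, 'm) cat \<Rightarrow> 'm \<Rightarrow> bool" where
  "is_iso C f \<longleftrightarrow> f \<in> Arr C \<and> (\<exists>g. hom C g (cod C f) (dom C f)
      \<and> cmp C g f = idt C (dom C f) \<and> cmp C f g = idt C (cod C f))"

definition is_mono :: "('o, 'm) cat \<Rightarrow> 'm \<Rightarrow> bool" where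
  "is_mono C f \<longleftrightarrow> f \<in> Arr C \<and> (\<forall>T a b. hom C a T (dom C f) \<longrightarrow> hom C b T (dom C f) \<longrightarrow>
      cmp C f a = cmp C f b \<longrightarrow> a = b)"

definition is_terminal :: "('o, 'm) cat \<Rightarrow> 'o \<Rightarrow> bool" where
  "is_terminal C t \<longleftrightarrow> t \<in> Obj C \<and> (\<forall>a \<in> Obj C. \<exists>!u. hom C u a t)"

definition is_pullback :: "('o, 'm) cat \<Rightarrow> 'm \<Rightarrow> 'm \<Rightarrow> 'o \<Rightarrow> 'm \<Rightarrow> 'm \<Rightarrow> bool" where
  "is_pullback C f g P p q \<longleftrightarrow>
     f \<in> Arr C \<and> g \<in> Arr C \<and> cod C f = cod C g
   \<and> hom C p P (dom C f) \<and> hom C q P (dom C g) \<and> cmp C f p = cmp C g q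
   \<and> (\<forall>T a b. hom C a T (dom C f) \<longrightarrow> hom C b T (dom C g) \<longrightarrow> cmp C f a = cmp C g b \<longrightarrow>
        (\<exists>!u. hom C u T P \<and> cmp C p u = a \<and> cmp C q u = b))"

definition is_product :: "('o, 'm) cat \<Rightarrow> 'o \<Rightarrow> 'o \<Rightarrow> 'o \<Rightarrow> 'm \<Rightarrow> 'm \<Rightarrow> bool" where
  "is_product C a b P p q \<longleftrightarrow>
     hom C p P a \<and> hom C q P b
   \<and> (\<forall>T x y. hom C x T a \<longrightarrow> hom C y T b \<longrightarrow>
        (\<exists>!u. hom C u T P \<and> cmp C p u = x \<and> cmp C q u = y))"

text \<open>Finitely complete: a terminal object and all pullbacks (equivalent to all finite limits).\<close>
definition finitely_complete :: "('o, 'm) cat \<Rightarrow> bool" where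
  "finitely_complete C \<longleftrightarrow> category C
   \<and> (\<exists>t. is_terminal C t)
   \<and> (\<forall>f g. f \<in> Arr C \<longrightarrow> g \<in> Arr C \<longrightarrow> cod C f = cod C g \<longrightarrow>
        (\<exists>P p q. is_pullback C f g P p q))"

text \<open>Object (A, f, s) of Pt_X: split epimorphism f : A \<rightarrow> X with section s.\<close>
definition is_point :: "('o, 'm) cat \<Rightarrow> 'o \<Rightarrow> 'o \<Rightarrow> 'm \<Rightarrow> 'm \<Rightarrow> bool" where
  "is_point C X A f s \<longleftrightarrow> hom C f A X \<and> hom C s X A \<and> cmp C f s = idt C X"

text \<open>The product of (A,f,s) with itself
 in Pt_X is the pullback (P, p, q) of f along f (with section induced by (s,s)); the terminal
 object of Pt_X is (X, 1, 1), so the unit is necessarily s.  The multiplication m : P \<rightarrow> A and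
 the inverse i : A \<rightarrow> A are morphisms of Pt_X, and the group axioms (equalities of morphisms
 out of finite products) are stated on generalised elements T \<rightarrow> A.\<close>
definition internal_group_in_Pt ::
  "('o, 'm) cat \<Rightarrow> 'o \<Rightarrow> 'o \<Rightarrow> 'm \<Rightarrow> 'm \<Rightarrow> 'o \<Rightarrow> 'm \<Rightarrow> 'm \<Rightarrow> 'm \<Rightarrow> 'm \<Rightarrow> bool" where
  "internal_group_in_Pt C X A f s P p q m i \<longleftrightarrow>
     is_point C X A f s \<and> is_pullback C f f P p q
   \<comment> \<open>m is a morphism in Pt_X\<close>
   \<and> hom C m P A \<and> cmp C f m = cmp C f p
   \<and> (\<forall>u. hom C u X P \<longrightarrow> cmp C p u = s \<longrightarrow> cmp C q u = s \<longrightarrow> cmp C m u = s)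
   \<comment> \<open>i is a morphism in Pt_X\<close>
   \<and> hom C i A A \<and> cmp C f i = f \<and> cmp C i s = s
   \<comment> \<open>associativity\<close>
   \<and> (\<forall>T a b c u1 u2 u3 u4.
        hom C a T A \<longrightarrow> hom C b T A \<longrightarrow> hom C c T A \<longrightarrow>
        cmp C f a = cmp C f b \<longrightarrow> cmp C f b = cmp C f c \<longrightarrow>
        hom C u1 T P \<longrightarrow> cmp C p u1 = a \<longrightarrow> cmp C q u1 = b \<longrightarrow>
        hom C u2 T P \<longrightarrow> cmp C p u2 = cmp C m u1 \<longrightarrow> cmp C q u2 = c \<longrightarrow>
        hom C u3 T P \<longrightarrow> cmp C p u3 = b \<longrightarrow> cmp C q u3 = c \<longrightarrow>
        hom C u4 T P \<longrightarrow> cmp C p u4 = a \<longrightarrow> cmp C q u4 = cmp C m u3 \<longrightarrow>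
        cmp C m u2 = cmp C m u4)
   \<comment> \<open>unit laws (unit is s)\<close>
   \<and> (\<forall>T a u. hom C a T A \<longrightarrow> hom C u T P \<longrightarrow>
        cmp C p u = cmp C s (cmp C f a) \<longrightarrow> cmp C q u = a \<longrightarrow> cmp C m u = a)
   \<and> (\<forall>T a u. hom C a T A \<longrightarrow> hom C u T P \<longrightarrow>
        cmp C p u = a \<longrightarrow> cmp C q u = cmp C s (cmp C f a) \<longrightarrow> cmp C m u = a)
   \<comment> \<open>inverse laws\<close>
   \<and> (\<forall>T a u. hom C a T A \<longrightarrow> hom C u T P \<longrightarrow>
        cmp C p u = cmp C i a \<longrightarrow> cmp C q u = a \<longrightarrow> cmp C m u = cmp C s (cmp C f a))
   \<and> (\<forall>T a u. hom C a T A \<longrightarrow> hom C u T P \<longrightarrow>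
        cmp C p u = a \<longrightarrow> cmp C q u = cmp C i a \<longrightarrow> cmp C m u = cmp C s (cmp C f a))"

definition refl_graph :: "('o, 'm) cat \<Rightarrow> 'o \<Rightarrow> 'o \<Rightarrow> 'm \<Rightarrow> 'm \<Rightarrow> 'm \<Rightarrow> bool" where
  "refl_graph C X X1 d0 d1 s0 \<longleftrightarrow> hom C d0 X1 X \<and> hom C d1 X1 X \<and> hom C s0 X X1
     \<and> cmp C d0 s0 = idt C X \<and> cmp C d1 s0 = idt C X"

text \<open>Internal groupoid structure.  d0 = domain, d1 = codomain.  X1 \<times>_X X1 is the pullback
 (P, p, q) with d0 p = d1 q: a generalised element (g, h) of P is a composable pair, g after h,
 and c : P \<rightarrow> X1 is the composition, with identities s0 and inverse map i.\<close>
definition groupoid_structure ::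
  "('o, 'm) cat \<Rightarrow> 'o \<Rightarrow> 'o \<Rightarrow> 'm \<Rightarrow> 'm \<Rightarrow> 'm \<Rightarrow> 'o \<Rightarrow> 'm \<Rightarrow> 'm \<Rightarrow> 'm \<Rightarrow> 'm \<Rightarrow> bool" where
  "groupoid_structure C X X1 d0 d1 s0 P p q c i \<longleftrightarrow>
     refl_graph C X X1 d0 d1 s0 \<and> is_pullback C d0 d1 P p q
   \<and> hom C c P X1 \<and> cmp C d0 c = cmp C d0 q \<and> cmp C d1 c = cmp C d1 p
   \<comment> \<open>associativity: (g h) k = g (h k)\<close>
   \<and> (\<forall>T g h k u1 u2 u3 u4.
        hom C g T X1 \<longrightarrow> hom C h T X1 \<longrightarrow> hom C k T X1 \<longrightarrow>
        cmp C d0 g = cmp C d1 h \<longrightarrow> cmp C d0 h = cmp C d1 k \<longrightarrow>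
        hom C u1 T P \<longrightarrow> cmp C p u1 = g \<longrightarrow> cmp C q u1 = h \<longrightarrow>
        hom C u2 T P \<longrightarrow> cmp C p u2 = cmp C c u1 \<longrightarrow> cmp C q u2 = k \<longrightarrow>
        hom C u3 T P \<longrightarrow> cmp C p u3 = h \<longrightarrow> cmp C q u3 = k \<longrightarrow>
        hom C u4 T P \<longrightarrow> cmp C p u4 = g \<longrightarrow> cmp C q u4 = cmp C c u3 \<longrightarrow>
        cmp C c u2 = cmp C c u4)
   \<comment> \<open>identities s0\<close>
   \<and> (\<forall>T g u. hom C g T X1 \<longrightarrow> hom C u T P \<longrightarrow>
        cmp C p u = cmp C s0 (cmp C d1 g) \<longrightarrow> cmp C q u = g \<longrightarrow> cmp C c u = g)
   \<and> (\<forall>T g u. hom C g T X1 \<longrightarrow> hom C u T P \<longrightarrow>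
        cmp C p u = g \<longrightarrow> cmp C q u = cmp C s0 (cmp C d0 g) \<longrightarrow> cmp C c u = g)
   \<comment> \<open>inverses\<close>
   \<and> hom C i X1 X1 \<and> cmp C d0 i = d1 \<and> cmp C d1 i = d0
   \<and> (\<forall>T g u. hom C g T X1 \<longrightarrow> hom C u T P \<longrightarrow>
        cmp C p u = cmp C i g \<longrightarrow> cmp C q u = g \<longrightarrow> cmp C c u = cmp C s0 (cmp C d0 g))
   \<and> (\<forall>T g u. hom C g T X1 \<longrightarrow> hom C u T P \<longrightarrow>
        cmp C p u = g \<longrightarrow> cmp C q u = cmp C i g \<longrightarrow> cmp C c u = cmp C s0 (cmp C d1 g))"

definition admits_groupoid_structure :: "('o, 'm) cat \<Rightarrow> 'o \<Rightarrow> 'o \<Rightarrow> 'm \<Rightarrow> 'm \<Rightarrow> 'm \<Rightarrow> bool" where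
  "admits_groupoid_structure C X X1 d0 d1 s0 \<longleftrightarrow>
     (\<exists>P p q c i. groupoid_structure C X X1 d0 d1 s0 P p q c i)"

end

theory Submission
  imports Defs
begin

text \<open>The loops of the groupoid, the arrows
  g with d0 g = d1 g, are classified by the pullback E of (d0, d1) : X1 \<rightarrow> X \<times> X along the
  diagonal. Composition, identities and inverses of the groupoid restrict to loops and make
  t : E \<rightarrow> X an internal group in Pt_X, so t is an isomorphism by hypothesis, which forces every
  loop to be an identity. Now if a and b are parallel arrows, the composite of a with the inverse
  of b is a loop, hence an identity, so a = b; that is, (d0, d1) is a monomorphism.\<close>

locale categorical =
  fixes C :: "('o, 'm) cat"
  assumes category: "category C"
begin

abbreviation cp (infixr "\<cdot>" 55) where "g \<cdot> f \<equiv> cmp C g f"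

lemma comp_hom: "hom C f a b \<Longrightarrow> hom C g b c \<Longrightarrow> hom C (g \<cdot> f) a c"
  using category unfolding category_def by blast

lemma comp_assoc: "hom C f a b \<Longrightarrow> hom C g b c \<Longrightarrow> hom C h c d \<Longrightarrow> h \<cdot> g \<cdot> f = (h \<cdot> g) \<cdot> f"
  using category unfolding category_def by blast

lemma comp_id_left: "hom C f a b \<Longrightarrow> idt C b \<cdot> f = f"
  using category unfolding category_def by blast

lemma comp_id_right: "hom C f a b \<Longrightarrow> f \<cdot> idt C a = f"
  using category unfolding category_def by blast

lemma id_hom: "a \<in> Obj C \<Longrightarrow> hom C (idt C a) a a"
  using category unfolding category_def by blast

lemma comp_assoc_eq:
  "g \<cdot> f = h \<Longrightarrow> hom C x T a \<Longrightarrow> hom C f a b \<Longrightarrow> hom C g b c \<Longrightarrow> g \<cdot> f \<cdot> x = h \<cdot> x"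
  using comp_assoc by metis

lemma pullback_hom:
  assumes "is_pullback C f g P p q" "hom C f A Z" "hom C g B Z"
  shows "hom C p P A" "hom C q P B" "f \<cdot> p = g \<cdot> q"
proof -
  have "dom C f = A" "dom C g = B"
    using assms(2,3) unfolding hom_def by auto
  moreover have "hom C p P (dom C f) \<and> hom C q P (dom C g) \<and> f \<cdot> p = g \<cdot> q"
    using assms(1) unfolding is_pullback_def by (elim conjE) (intro conjI; assumption)
  ultimately show "hom C p P A" "hom C q P B" "f \<cdot> p = g \<cdot> q"
    by simp_all
qed

lemma pullback_unique_lift:
  assumes "is_pullback C f g P p q" "hom C f A Z" "hom C g B Z"
    and "hom C a T A" "hom C b T B" "f \<cdot> a = g \<cdot> b"
  shows "\<exists>!u. hom C u T P \<and> p \<cdot> u = a \<and> q \<cdot> u = b"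
proof -
  have "dom C f = A" "dom C g = B"
    using assms(2,3) unfolding hom_def by auto
  moreover have "\<forall>T a b. hom C a T (dom C f) \<longrightarrow> hom C b T (dom C g) \<longrightarrow> f \<cdot> a = g \<cdot> b \<longrightarrow>
      (\<exists>!u. hom C u T P \<and> p \<cdot> u = a \<and> q \<cdot> u = b)"
    using assms(1) unfolding is_pullback_def by (elim conjE)
  ultimately show ?thesis
    using assms(4-6) by simp
qed

lemma pullback_lift:
  assumes "is_pullback C f g P p q" "hom C f A Z" "hom C g B Z"
    and "hom C a T A" "hom C b T B" "f \<cdot> a = g \<cdot> b"
  obtains u where "hom C u T P" "p \<cdot> u = a" "q \<cdot> u = b"
  using pullback_unique_lift[OF assms] by blast

lemma pullback_eq:
  assumes pb: "is_pullback C f g P p q" and f: "hom C f A Z" and g: "hom C g B Z"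
    and u: "hom C u T P" and v: "hom C v T P" and "p \<cdot> u = p \<cdot> v" "q \<cdot> u = q \<cdot> v"
  shows "u = v"
proof -
  have p: "hom C p P A" and q: "hom C q P B" and fpq: "f \<cdot> p = g \<cdot> q"
    using pullback_hom[OF pb f g] by auto
  have "f \<cdot> p \<cdot> u = g \<cdot> q \<cdot> u"
    using comp_assoc_eq[OF fpq u p f] comp_assoc[OF u q g] by simp
  then have "\<exists>!w. hom C w T P \<and> p \<cdot> w = p \<cdot> u \<and> q \<cdot> w = q \<cdot> u"
    using pullback_unique_lift[OF pb f g comp_hom[OF u p] comp_hom[OF u q]] by simp
  then show ?thesis
    using u v assms(6,7) by metis
qed

lemma product_unique_lift:
  assumes "is_product C a b P p q" "hom C x T a" "hom C y T b"
  shows "\<exists>!u. hom C u T P \<and> p \<cdot> u = x \<and> q \<cdot> u = y"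
proof -
  have "\<forall>T x y. hom C x T a \<longrightarrow> hom C y T b \<longrightarrow> (\<exists>!u. hom C u T P \<and> p \<cdot> u = x \<and> q \<cdot> u = y)"
    using assms(1) unfolding is_product_def by (elim conjE)
  then show ?thesis
    using assms(2,3) by simp
qed

lemma product_eq:
  assumes pr: "is_product C a b P p q" and u: "hom C u T P" and v: "hom C v T P"
    and "p \<cdot> u = p \<cdot> v" "q \<cdot> u = q \<cdot> v"
  shows "u = v"
proof -
  have p: "hom C p P a"
    using pr unfolding is_product_def by (elim conjE)
  have q: "hom C q P b"
    using pr unfolding is_product_def by (elim conjE)
  have "\<exists>!w. hom C w T P \<and> p \<cdot> w = p \<cdot> u \<and> q \<cdot> w = q \<cdot> u"
    using product_unique_lift[OF pr comp_hom[OF u p] comp_hom[OF u q]] .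
  then show ?thesis
    using u v assms(4,5) by metis
qed

lemma iso_cancel:
  assumes "is_iso C f" "hom C f A B" "hom C x T A" "hom C y T A" "f \<cdot> x = f \<cdot> y"
  shows "x = y"
proof -
  have "dom C f = A" "cod C f = B"
    using assms(2) unfolding hom_def by auto
  then obtain g where g: "hom C g B A" and gf: "g \<cdot> f = idt C A"
    using assms(1) unfolding is_iso_def by auto
  have "x = g \<cdot> f \<cdot> x"
    using comp_assoc_eq[OF gf assms(3,2) g] comp_id_left[OF assms(3)] by simp
  also have "\<dots> = g \<cdot> f \<cdot> y"
    using assms(5) by simp
  also have "\<dots> = y"
    using comp_assoc_eq[OF gf assms(4,2) g] comp_id_left[OF assms(4)] by simp
  finally show ?thesis .
qed

lemma diagonal_exists:
  assumes "is_product C X X XX pr0 pr1" "X \<in> Obj C"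
  obtains \<delta> where "hom C \<delta> X XX" "pr0 \<cdot> \<delta> = idt C X" "pr1 \<cdot> \<delta> = idt C X"
  using product_unique_lift[OF assms(1) id_hom id_hom] assms(2) by blast

lemma pairing_mono:
  assumes prod: "is_product C X X XX pr0 pr1"
    and r: "hom C r X1 XX" "pr0 \<cdot> r = d0" "pr1 \<cdot> r = d1"
    and faithful: "\<And>T a b. hom C a T X1 \<Longrightarrow> hom C b T X1 \<Longrightarrow>
                      d0 \<cdot> a = d0 \<cdot> b \<Longrightarrow> d1 \<cdot> a = d1 \<cdot> b \<Longrightarrow> a = b"
  shows "is_mono C r"
  unfolding is_mono_def
proof (intro conjI allI impI)
  show "r \<in> Arr C"
    using r(1) unfolding hom_def by simp
  have pr0: "hom C pr0 XX X" and pr1: "hom C pr1 XX X"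
    using prod unfolding is_product_def by blast+
  fix T a b
  assume "hom C a T (dom C r)" "hom C b T (dom C r)" and rab: "r \<cdot> a = r \<cdot> b"
  then have a: "hom C a T X1" and b: "hom C b T X1"
    using r(1) unfolding hom_def by auto
  show "a = b"
  proof (rule faithful[OF a b])
    show "d0 \<cdot> a = d0 \<cdot> b"
      using comp_assoc_eq[OF r(2) a r(1) pr0] comp_assoc_eq[OF r(2) b r(1) pr0] rab by simp
    show "d1 \<cdot> a = d1 \<cdot> b"
      using comp_assoc_eq[OF r(3) a r(1) pr1] comp_assoc_eq[OF r(3) b r(1) pr1] rab by simp
  qed
qed

end

lemma pullback_exists:
  assumes "finitely_complete C" "hom C f A Z" "hom C g B Z"
  obtains P p q where "is_pullback C f g P p q"
  using assms unfolding finitely_complete_def hom_def by metis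

locale internal_groupoid = categorical +
  fixes X X1 d0 d1 s0 P p q c i
  assumes groupoid: "groupoid_structure C X X1 d0 d1 s0 P p q c i"
begin

lemma d0_hom: "hom C d0 X1 X" and d1_hom: "hom C d1 X1 X" and s0_hom: "hom C s0 X X1"
  and d0_s0: "d0 \<cdot> s0 = idt C X" and d1_s0: "d1 \<cdot> s0 = idt C X"
  using groupoid unfolding groupoid_structure_def refl_graph_def by blast+

lemma composable_pullback: "is_pullback C d0 d1 P p q"
  using groupoid unfolding groupoid_structure_def by blast

lemma p_hom: "hom C p P X1" and q_hom: "hom C q P X1"
  using pullback_hom[OF composable_pullback d0_hom d1_hom] by auto

lemma c_hom: "hom C c P X1" and d0_c: "d0 \<cdot> c = d0 \<cdot> q" and d1_c: "d1 \<cdot> c = d1 \<cdot> p"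
  and i_hom: "hom C i X1 X1" and d0_i: "d0 \<cdot> i = d1" and d1_i: "d1 \<cdot> i = d0"
  using groupoid unfolding groupoid_structure_def by blast+

lemma c_assoc:
  "\<lbrakk>hom C g T X1; hom C h T X1; hom C k T X1; d0 \<cdot> g = d1 \<cdot> h; d0 \<cdot> h = d1 \<cdot> k;
    hom C u1 T P; p \<cdot> u1 = g; q \<cdot> u1 = h; hom C u2 T P; p \<cdot> u2 = c \<cdot> u1; q \<cdot> u2 = k;
    hom C u3 T P; p \<cdot> u3 = h; q \<cdot> u3 = k; hom C u4 T P; p \<cdot> u4 = g; q \<cdot> u4 = c \<cdot> u3\<rbrakk>
   \<Longrightarrow> c \<cdot> u2 = c \<cdot> u4"
  using groupoid unfolding groupoid_structure_def by blast

lemma c_id_left: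
  "\<lbrakk>hom C g T X1; hom C u T P; p \<cdot> u = s0 \<cdot> d1 \<cdot> g; q \<cdot> u = g\<rbrakk> \<Longrightarrow> c \<cdot> u = g"
  using groupoid unfolding groupoid_structure_def by blast

lemma c_id_right:
  "\<lbrakk>hom C g T X1; hom C u T P; p \<cdot> u = g; q \<cdot> u = s0 \<cdot> d0 \<cdot> g\<rbrakk> \<Longrightarrow> c \<cdot> u = g"
  using groupoid unfolding groupoid_structure_def by blast

lemma c_inv_left:
  "\<lbrakk>hom C g T X1; hom C u T P; p \<cdot> u = i \<cdot> g; q \<cdot> u = g\<rbrakk> \<Longrightarrow> c \<cdot> u = s0 \<cdot> d0 \<cdot> g"
  using groupoid unfolding groupoid_structure_def by blast

lemma c_inv_right:
  "\<lbrakk>hom C g T X1; hom C u T P; p \<cdot> u = g; q \<cdot> u = i \<cdot> g\<rbrakk> \<Longrightarrow> c \<cdot> u = s0 \<cdot> d1 \<cdot> g"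
  using groupoid unfolding groupoid_structure_def by blast

text \<open>For g, h : T \<rightarrow> X1 with d0 g = d1 h, g \<odot> h is the composite ``g after h''; on
  non-composable pairs pair is an unspecified value.\<close>

definition pair where
  "pair g h = (THE v. hom C v (dom C g) P \<and> p \<cdot> v = g \<and> q \<cdot> v = h)"

definition gcomp (infixl "\<odot>" 70) where
  "g \<odot> h = c \<cdot> pair g h"

context
  fixes T g h
  assumes g: "hom C g T X1" and h: "hom C h T X1" and gh: "d0 \<cdot> g = d1 \<cdot> h"
begin

lemma pair_unique: "\<exists>!v. hom C v T P \<and> p \<cdot> v = g \<and> q \<cdot> v = h"
  using pullback_unique_lift[OF composable_pullback d0_hom d1_hom g h gh] .

lemma pair: "hom C (pair g h) T P" "p \<cdot> pair g h = g" "q \<cdot> pair g h = h"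
proof -
  have "dom C g = T"
    using g unfolding hom_def by simp
  then show "hom C (pair g h) T P" "p \<cdot> pair g h = g" "q \<cdot> pair g h = h"
    using theI'[OF pair_unique] unfolding pair_def by simp_all
qed

lemma pair_eq: "hom C v T P \<Longrightarrow> p \<cdot> v = g \<Longrightarrow> q \<cdot> v = h \<Longrightarrow> pair g h = v"
  using pair_unique pair by metis

lemma gcomp_hom: "hom C (g \<odot> h) T X1"
  unfolding gcomp_def using comp_hom[OF pair(1) c_hom] .

lemma d0_gcomp: "d0 \<cdot> (g \<odot> h) = d0 \<cdot> h"
  unfolding gcomp_def using comp_assoc_eq[OF d0_c pair(1) c_hom d0_hom]
    comp_assoc[OF pair(1) q_hom d0_hom] pair(3) by simp

lemma d1_gcomp: "d1 \<cdot> (g \<odot> h) = d1 \<cdot> g"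
  unfolding gcomp_def using comp_assoc_eq[OF d1_c pair(1) c_hom d1_hom]
    comp_assoc[OF pair(1) p_hom d1_hom] pair(2) by simp

end

lemma gcomp_comp:
  assumes g: "hom C g T X1" and h: "hom C h T X1" and gh: "d0 \<cdot> g = d1 \<cdot> h" and w: "hom C w S T"
  shows "(g \<odot> h) \<cdot> w = (g \<cdot> w) \<odot> (h \<cdot> w)"
proof -
  note gh_pair = pair[OF g h gh]
  have gw: "hom C (g \<cdot> w) S X1" and hw: "hom C (h \<cdot> w) S X1"
    using comp_hom[OF w g] comp_hom[OF w h] .
  have "d0 \<cdot> g \<cdot> w = d1 \<cdot> h \<cdot> w"
    using comp_assoc[OF w g d0_hom] comp_assoc[OF w h d1_hom] gh by simp
  moreover have "p \<cdot> pair g h \<cdot> w = g \<cdot> w" "q \<cdot> pair g h \<cdot> w = h \<cdot> w"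
    using comp_assoc_eq[OF gh_pair(2) w gh_pair(1) p_hom] comp_assoc_eq[OF gh_pair(3) w gh_pair(1) q_hom] .
  ultimately have "pair (g \<cdot> w) (h \<cdot> w) = pair g h \<cdot> w"
    using pair_eq[OF gw hw] comp_hom[OF w gh_pair(1)] by blast
  then show ?thesis
    unfolding gcomp_def using comp_assoc[OF w gh_pair(1) c_hom] by simp
qed

lemma identity_hom: "hom C x T X \<Longrightarrow> hom C (s0 \<cdot> x) T X1"
  using comp_hom s0_hom by blast

lemma d0_identity: "hom C x T X \<Longrightarrow> d0 \<cdot> s0 \<cdot> x = x"
  using comp_assoc_eq[OF d0_s0 _ s0_hom d0_hom] comp_id_left by metis

lemma d1_identity: "hom C x T X \<Longrightarrow> d1 \<cdot> s0 \<cdot> x = x"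
  using comp_assoc_eq[OF d1_s0 _ s0_hom d1_hom] comp_id_left by metis

lemma inverse_hom: "hom C g T X1 \<Longrightarrow> hom C (i \<cdot> g) T X1"
  using comp_hom i_hom by blast

lemma d0_inverse: "hom C g T X1 \<Longrightarrow> d0 \<cdot> i \<cdot> g = d1 \<cdot> g"
  using comp_assoc_eq[OF d0_i _ i_hom d0_hom] .

lemma d1_inverse: "hom C g T X1 \<Longrightarrow> d1 \<cdot> i \<cdot> g = d0 \<cdot> g"
  using comp_assoc_eq[OF d1_i _ i_hom d1_hom] .

lemma d0_comp_hom: "hom C g T X1 \<Longrightarrow> hom C (d0 \<cdot> g) T X"
  using comp_hom d0_hom by blast

lemma d1_comp_hom: "hom C g T X1 \<Longrightarrow> hom C (d1 \<cdot> g) T X"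
  using comp_hom d1_hom by blast

lemma gcomp_assoc:
  assumes g: "hom C g T X1" and h: "hom C h T X1" and k: "hom C k T X1"
    and gh: "d0 \<cdot> g = d1 \<cdot> h" and hk: "d0 \<cdot> h = d1 \<cdot> k"
  shows "(g \<odot> h) \<odot> k = g \<odot> (h \<odot> k)"
proof -
  have gh_k: "d0 \<cdot> (g \<odot> h) = d1 \<cdot> k" and g_hk: "d0 \<cdot> g = d1 \<cdot> (h \<odot> k)"
    using d0_gcomp[OF g h gh] d1_gcomp[OF h k hk] gh hk by simp_all
  note u1 = pair[OF g h gh] and u2 = pair[OF gcomp_hom[OF g h gh] k gh_k]
    and u3 = pair[OF h k hk] and u4 = pair[OF g gcomp_hom[OF h k hk] g_hk]
  have "c \<cdot> pair (g \<odot> h) k = c \<cdot> pair g (h \<odot> k)"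
    by (rule c_assoc[OF g h k gh hk u1 u2(1) _ u2(3) u3 u4(1,2)])
      (use u2(2) u4(3) in \<open>simp_all add: gcomp_def\<close>)
  then show ?thesis
    by (simp only: gcomp_def[of "g \<odot> h" k] gcomp_def[of g "h \<odot> k"])
qed

lemma gcomp_id_left:
  assumes g: "hom C g T X1"
  shows "(s0 \<cdot> d1 \<cdot> g) \<odot> g = g"
proof -
  note x = d1_comp_hom[OF g]
  note u = pair[OF identity_hom[OF x] g d0_identity[OF x]]
  show ?thesis
    unfolding gcomp_def using c_id_left[OF g u] .
qed

lemma gcomp_id_right:
  assumes g: "hom C g T X1"
  shows "g \<odot> (s0 \<cdot> d0 \<cdot> g) = g"
proof -
  note x = d0_comp_hom[OF g]
  note u = pair[OF g identity_hom[OF x] d1_identity[OF x, symmetric]]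
  show ?thesis
    unfolding gcomp_def using c_id_right[OF g u] .
qed

lemma gcomp_inv_left:
  assumes g: "hom C g T X1"
  shows "(i \<cdot> g) \<odot> g = s0 \<cdot> d0 \<cdot> g"
  unfolding gcomp_def using c_inv_left[OF g pair[OF inverse_hom[OF g] g d0_inverse[OF g]]] .

lemma gcomp_inv_right:
  assumes g: "hom C g T X1"
  shows "g \<odot> (i \<cdot> g) = s0 \<cdot> d1 \<cdot> g"
  unfolding gcomp_def using c_inv_right[OF g pair[OF g inverse_hom[OF g] d1_inverse[OF g, symmetric]]] .

lemma parallel_eq_if_loops_trivial:
  assumes loops: "\<And>T l. hom C l T X1 \<Longrightarrow> d0 \<cdot> l = d1 \<cdot> l \<Longrightarrow> l = s0 \<cdot> d0 \<cdot> l"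
    and a: "hom C a T X1" and b: "hom C b T X1"
    and d0_ab: "d0 \<cdot> a = d0 \<cdot> b" and d1_ab: "d1 \<cdot> a = d1 \<cdot> b"
  shows "a = b"
proof -
  have ib: "hom C (i \<cdot> b) T X1"
    using inverse_hom[OF b] .
  have a_ib: "d0 \<cdot> a = d1 \<cdot> i \<cdot> b" and ib_b: "d0 \<cdot> i \<cdot> b = d1 \<cdot> b"
    using d1_inverse[OF b] d0_inverse[OF b] d0_ab by simp_all
  have "d0 \<cdot> (a \<odot> (i \<cdot> b)) = d1 \<cdot> (a \<odot> (i \<cdot> b))"
    using d0_gcomp[OF a ib a_ib] d1_gcomp[OF a ib a_ib] ib_b d1_ab by simp
  then have loop: "a \<odot> (i \<cdot> b) = s0 \<cdot> d1 \<cdot> b"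
    using loops[OF gcomp_hom[OF a ib a_ib]] d0_gcomp[OF a ib a_ib] ib_b by simp
  have "a = a \<odot> ((i \<cdot> b) \<odot> b)"
    using gcomp_id_right[OF a] gcomp_inv_left[OF b] d0_ab by simp
  also have "\<dots> = (a \<odot> (i \<cdot> b)) \<odot> b"
    using gcomp_assoc[OF a ib b a_ib ib_b] by simp
  also have "\<dots> = b"
    using loop gcomp_id_left[OF b] by simp
  finally show ?thesis .
qed

lemma inverse_identity:
  assumes x: "hom C x T X"
  shows "i \<cdot> s0 \<cdot> x = s0 \<cdot> x"
proof -
  note e = identity_hom[OF x]
  have "i \<cdot> s0 \<cdot> x = (i \<cdot> s0 \<cdot> x) \<odot> (s0 \<cdot> d0 \<cdot> i \<cdot> s0 \<cdot> x)"
    using gcomp_id_right[OF inverse_hom[OF e]] by simp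
  also have "\<dots> = (i \<cdot> s0 \<cdot> x) \<odot> (s0 \<cdot> x)"
    using d0_inverse[OF e] d1_identity[OF x] by simp
  also have "\<dots> = s0 \<cdot> x"
    using gcomp_inv_left[OF e] d0_identity[OF x] by simp
  finally show ?thesis .
qed

end

definition loop_object :: "('o, 'm) cat \<Rightarrow> 'o \<Rightarrow> 'o \<Rightarrow> 'm \<Rightarrow> 'm \<Rightarrow> 'o \<Rightarrow> 'm \<Rightarrow> 'm \<Rightarrow> bool" where
  "loop_object C X X1 d0 d1 E e t \<longleftrightarrow>
     hom C e E X1 \<and> hom C t E X \<and> cmp C d0 e = t \<and> cmp C d1 e = t
   \<and> (\<forall>T l. hom C l T X1 \<longrightarrow> cmp C d0 l = cmp C d1 l \<longrightarrow> (\<exists>!w. hom C w T E \<and> cmp C e w = l))"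

context categorical
begin

lemma diagonal_pullback_loop_object:
  assumes prod: "is_product C X X XX pr0 pr1"
    and d0: "hom C d0 X1 X"
    and r: "hom C r X1 XX" "pr0 \<cdot> r = d0" "pr1 \<cdot> r = d1"
    and \<delta>: "hom C \<delta> X XX" "pr0 \<cdot> \<delta> = idt C X" "pr1 \<cdot> \<delta> = idt C X"
    and pb: "is_pullback C r \<delta> E e t"
  shows "loop_object C X X1 d0 d1 E e t"
proof -
  have pr0: "hom C pr0 XX X" and pr1: "hom C pr1 XX X"
    using prod unfolding is_product_def by blast+
  have e: "hom C e E X1" and t: "hom C t E X" and re: "r \<cdot> e = \<delta> \<cdot> t"
    using pullback_hom[OF pb r(1) \<delta>(1)] by auto
  have pr_r: "pr \<cdot> r \<cdot> l = d \<cdot> l" if "pr \<cdot> r = d" "hom C pr XX X" "hom C l T X1" for pr d l T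
    using comp_assoc_eq[OF that(1) that(3) r(1) that(2)] .
  have pr_\<delta>: "pr \<cdot> \<delta> \<cdot> x = x" if "pr \<cdot> \<delta> = idt C X" "hom C pr XX X" "hom C x T X" for pr x T
    using comp_assoc_eq[OF that(1) that(3) \<delta>(1) that(2)] comp_id_left[OF that(3)] by simp
  have d0e: "d0 \<cdot> e = t" and d1e: "d1 \<cdot> e = t"
    using pr_r[OF r(2) pr0 e] pr_r[OF r(3) pr1 e] pr_\<delta>[OF \<delta>(2) pr0 t] pr_\<delta>[OF \<delta>(3) pr1 t] re
    by simp_all
  have "\<exists>!w. hom C w T E \<and> e \<cdot> w = l" if l: "hom C l T X1" and loop: "d0 \<cdot> l = d1 \<cdot> l" for T l
  proof -
    have x: "hom C (d0 \<cdot> l) T X"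
      using comp_hom[OF l d0] .
    have "r \<cdot> l = \<delta> \<cdot> d0 \<cdot> l"
      using product_eq[OF prod comp_hom[OF l r(1)] comp_hom[OF x \<delta>(1)]]
        pr_r[OF r(2) pr0 l] pr_r[OF r(3) pr1 l] pr_\<delta>[OF \<delta>(2) pr0 x] pr_\<delta>[OF \<delta>(3) pr1 x] loop
      by simp
    then obtain w where w: "hom C w T E" "e \<cdot> w = l" "t \<cdot> w = d0 \<cdot> l"
      using pullback_lift[OF pb r(1) \<delta>(1) l x] by blast
    have "w' = w" if w': "hom C w' T E" "e \<cdot> w' = l" for w'
    proof (rule pullback_eq[OF pb r(1) \<delta>(1) w'(1) w(1)])
      show "e \<cdot> w' = e \<cdot> w"
        using w(2) w'(2) by simp
      show "t \<cdot> w' = t \<cdot> w"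
        using comp_assoc_eq[OF d0e w'(1) e d0] w w'(2) by simp
    qed
    then show ?thesis
      using w by blast
  qed
  then show ?thesis
    unfolding loop_object_def using e t d0e d1e by blast
qed

end

text \<open>The pullback of t along itself is the product of E with itself in Pt_X.\<close>

locale groupoid_loops = internal_groupoid +
  fixes E e t PE pe qe
  assumes loops: "loop_object C X X1 d0 d1 E e t"
    and loop_pairs: "is_pullback C t t PE pe qe"
begin

lemma e_hom: "hom C e E X1" and t_hom: "hom C t E X" and d0_e: "d0 \<cdot> e = t" and d1_e: "d1 \<cdot> e = t"
  using loops unfolding loop_object_def by blast+

lemma lift_unique: "hom C l T X1 \<Longrightarrow> d0 \<cdot> l = d1 \<cdot> l \<Longrightarrow> \<exists>!w. hom C w T E \<and> e \<cdot> w = l"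
  using loops unfolding loop_object_def by blast

definition lift where
  "lift l = (THE w. hom C w (dom C l) E \<and> e \<cdot> w = l)"

lemma lift:
  assumes "hom C l T X1" "d0 \<cdot> l = d1 \<cdot> l"
  shows "hom C (lift l) T E" "e \<cdot> lift l = l"
proof -
  have "dom C l = T"
    using assms(1) unfolding hom_def by simp
  then show "hom C (lift l) T E" "e \<cdot> lift l = l"
    using theI'[OF lift_unique[OF assms]] unfolding lift_def by simp_all
qed

lemma d0_e_comp: "hom C w T E \<Longrightarrow> d0 \<cdot> e \<cdot> w = t \<cdot> w"
  using comp_assoc_eq[OF d0_e _ e_hom d0_hom] .

lemma d1_e_comp: "hom C w T E \<Longrightarrow> d1 \<cdot> e \<cdot> w = t \<cdot> w"
  using comp_assoc_eq[OF d1_e _ e_hom d1_hom] .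

lemma e_cancel:
  assumes w: "hom C w T E" and w': "hom C w' T E" and "e \<cdot> w = e \<cdot> w'"
  shows "w = w'"
proof -
  have "d0 \<cdot> e \<cdot> w = d1 \<cdot> e \<cdot> w"
    using d0_e_comp[OF w] d1_e_comp[OF w] by simp
  then have "\<exists>!v. hom C v T E \<and> e \<cdot> v = e \<cdot> w"
    using lift_unique[OF comp_hom[OF w e_hom]] by simp
  then show ?thesis
    using w w' assms(3) by metis
qed

lemma loops_trivial_if_iso:
  assumes iso: "is_iso C t" and l: "hom C l T X1" and loop: "d0 \<cdot> l = d1 \<cdot> l"
  shows "l = s0 \<cdot> d0 \<cdot> l"
proof -
  note x = d0_comp_hom[OF l]
  have s0_loop: "d0 \<cdot> s0 \<cdot> d0 \<cdot> l = d1 \<cdot> s0 \<cdot> d0 \<cdot> l"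
    using d0_identity[OF x] d1_identity[OF x] by simp
  note w = lift[OF l loop] and w' = lift[OF identity_hom[OF x] s0_loop]
  have "t \<cdot> lift l = t \<cdot> lift (s0 \<cdot> d0 \<cdot> l)"
    using d0_e_comp[OF w(1)] d0_e_comp[OF w'(1)] w(2) w'(2) d0_identity[OF x] by simp
  then have "lift l = lift (s0 \<cdot> d0 \<cdot> l)"
    using iso_cancel[OF iso t_hom w(1) w'(1)] by simp
  then show ?thesis
    using w(2) w'(2) by metis
qed

lemma pe_hom: "hom C pe PE E" and qe_hom: "hom C qe PE E" and t_pe: "t \<cdot> pe = t \<cdot> qe"
  using pullback_hom[OF loop_pairs t_hom t_hom] by auto

lemma composable_loops:
  "hom C a T E \<Longrightarrow> hom C b T E \<Longrightarrow> t \<cdot> a = t \<cdot> b \<Longrightarrow> d0 \<cdot> e \<cdot> a = d1 \<cdot> e \<cdot> b"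
  using d0_e_comp d1_e_comp by simp

lemma e_comp_hom: "hom C a T E \<Longrightarrow> hom C (e \<cdot> a) T X1"
  using comp_hom e_hom by blast

definition loop_unit where
  "loop_unit = lift s0"

definition loop_mult where
  "loop_mult = lift ((e \<cdot> pe) \<odot> (e \<cdot> qe))"

definition loop_inv where
  "loop_inv = lift (i \<cdot> e)"

lemma loop_unit: "hom C loop_unit X E" "e \<cdot> loop_unit = s0"
  unfolding loop_unit_def using lift[OF s0_hom] d0_s0 d1_s0 by simp_all

lemma t_loop_unit: "t \<cdot> loop_unit = idt C X"
  using d0_e_comp[OF loop_unit(1)] loop_unit(2) d0_s0 by simp

lemma e_loop_unit_comp: "hom C x T X \<Longrightarrow> e \<cdot> loop_unit \<cdot> x = s0 \<cdot> x"
  using comp_assoc_eq[OF loop_unit(2) _ loop_unit(1) e_hom] .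

lemma loop_mult: "hom C loop_mult PE E" "e \<cdot> loop_mult = (e \<cdot> pe) \<odot> (e \<cdot> qe)"
proof -
  note pq = composable_loops[OF pe_hom qe_hom t_pe]
  have "d0 \<cdot> ((e \<cdot> pe) \<odot> (e \<cdot> qe)) = d1 \<cdot> ((e \<cdot> pe) \<odot> (e \<cdot> qe))"
    using d0_gcomp[OF e_comp_hom[OF pe_hom] e_comp_hom[OF qe_hom] pq]
      d1_gcomp[OF e_comp_hom[OF pe_hom] e_comp_hom[OF qe_hom] pq]
      d0_e_comp[OF qe_hom] d1_e_comp[OF pe_hom] t_pe by simp
  then show "hom C loop_mult PE E" "e \<cdot> loop_mult = (e \<cdot> pe) \<odot> (e \<cdot> qe)"
    unfolding loop_mult_def using lift gcomp_hom[OF e_comp_hom[OF pe_hom] e_comp_hom[OF qe_hom] pq]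
    by blast+
qed

lemma e_loop_mult_comp:
  assumes w: "hom C w T PE"
  shows "e \<cdot> loop_mult \<cdot> w = (e \<cdot> pe \<cdot> w) \<odot> (e \<cdot> qe \<cdot> w)"
proof -
  have "e \<cdot> loop_mult \<cdot> w = ((e \<cdot> pe) \<odot> (e \<cdot> qe)) \<cdot> w"
    using comp_assoc_eq[OF loop_mult(2) w loop_mult(1) e_hom] .
  also have "\<dots> = (e \<cdot> pe \<cdot> w) \<odot> (e \<cdot> qe \<cdot> w)"
    using gcomp_comp[OF e_comp_hom[OF pe_hom] e_comp_hom[OF qe_hom]
        composable_loops[OF pe_hom qe_hom t_pe] w]
      comp_assoc[OF w pe_hom e_hom] comp_assoc[OF w qe_hom e_hom] by simp
  finally show ?thesis .
qed

lemma t_loop_mult: "t \<cdot> loop_mult = t \<cdot> pe"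
  using d0_e_comp[OF loop_mult(1)] loop_mult(2) d0_gcomp[OF e_comp_hom[OF pe_hom] e_comp_hom[OF qe_hom]
      composable_loops[OF pe_hom qe_hom t_pe]] d0_e_comp[OF qe_hom] t_pe by simp

lemma loop_inv: "hom C loop_inv E E" "e \<cdot> loop_inv = i \<cdot> e"
  unfolding loop_inv_def using lift[OF inverse_hom[OF e_hom]] d0_inverse[OF e_hom] d1_inverse[OF e_hom]
    d0_e d1_e by simp_all

lemma t_loop_inv: "t \<cdot> loop_inv = t"
  using d0_e_comp[OF loop_inv(1)] loop_inv(2) d0_inverse[OF e_hom] d1_e by simp

lemma e_loop_inv_comp: "hom C a T E \<Longrightarrow> e \<cdot> loop_inv \<cdot> a = i \<cdot> e \<cdot> a"
  using comp_assoc_eq[OF loop_inv(2) _ loop_inv(1) e_hom] comp_assoc[OF _ e_hom i_hom] by metis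

lemma e_loop_mult_pair:
  "hom C w T PE \<Longrightarrow> pe \<cdot> w = a \<Longrightarrow> qe \<cdot> w = b \<Longrightarrow> e \<cdot> loop_mult \<cdot> w = (e \<cdot> a) \<odot> (e \<cdot> b)"
  using e_loop_mult_comp by simp

lemma loop_mult_cancel:
  "hom C w T PE \<Longrightarrow> hom C a T E \<Longrightarrow> e \<cdot> loop_mult \<cdot> w = e \<cdot> a \<Longrightarrow> loop_mult \<cdot> w = a"
  using e_cancel comp_hom loop_mult(1) by blast

lemma loop_mult_assoc:
  assumes a: "hom C a T E" and b: "hom C b T E" and k: "hom C k T E"
    and ab: "t \<cdot> a = t \<cdot> b" and bk: "t \<cdot> b = t \<cdot> k"
    and u1: "hom C u1 T PE" "pe \<cdot> u1 = a" "qe \<cdot> u1 = b"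
    and u2: "hom C u2 T PE" "pe \<cdot> u2 = loop_mult \<cdot> u1" "qe \<cdot> u2 = k"
    and u3: "hom C u3 T PE" "pe \<cdot> u3 = b" "qe \<cdot> u3 = k"
    and u4: "hom C u4 T PE" "pe \<cdot> u4 = a" "qe \<cdot> u4 = loop_mult \<cdot> u3"
  shows "loop_mult \<cdot> u2 = loop_mult \<cdot> u4"
proof (rule loop_mult_cancel[OF u2(1) comp_hom[OF u4(1) loop_mult(1)]])
  note ea = e_comp_hom[OF a] and eb = e_comp_hom[OF b] and ek = e_comp_hom[OF k]
  note e_ab = composable_loops[OF a b ab] and e_bk = composable_loops[OF b k bk]
  have "e \<cdot> loop_mult \<cdot> u2 = ((e \<cdot> a) \<odot> (e \<cdot> b)) \<odot> (e \<cdot> k)"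
    using e_loop_mult_pair[OF u2] e_loop_mult_pair[OF u1] by simp
  also have "\<dots> = (e \<cdot> a) \<odot> ((e \<cdot> b) \<odot> (e \<cdot> k))"
    using gcomp_assoc[OF ea eb ek e_ab e_bk] .
  also have "\<dots> = e \<cdot> loop_mult \<cdot> u4"
    using e_loop_mult_pair[OF u4] e_loop_mult_pair[OF u3] by simp
  finally show "e \<cdot> loop_mult \<cdot> u2 = e \<cdot> loop_mult \<cdot> u4" .
qed

lemma loop_mult_unit_left:
  assumes a: "hom C a T E" and u: "hom C u T PE" "pe \<cdot> u = loop_unit \<cdot> t \<cdot> a" "qe \<cdot> u = a"
  shows "loop_mult \<cdot> u = a"
proof (rule loop_mult_cancel[OF u(1) a])
  have "e \<cdot> loop_mult \<cdot> u = (s0 \<cdot> d1 \<cdot> e \<cdot> a) \<odot> (e \<cdot> a)"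
    using e_loop_mult_pair[OF u] e_loop_unit_comp[OF comp_hom[OF a t_hom]] d1_e_comp[OF a] by simp
  then show "e \<cdot> loop_mult \<cdot> u = e \<cdot> a"
    using gcomp_id_left[OF e_comp_hom[OF a]] by simp
qed

lemma loop_mult_unit_right:
  assumes a: "hom C a T E" and u: "hom C u T PE" "pe \<cdot> u = a" "qe \<cdot> u = loop_unit \<cdot> t \<cdot> a"
  shows "loop_mult \<cdot> u = a"
proof (rule loop_mult_cancel[OF u(1) a])
  have "e \<cdot> loop_mult \<cdot> u = (e \<cdot> a) \<odot> (s0 \<cdot> d0 \<cdot> e \<cdot> a)"
    using e_loop_mult_pair[OF u] e_loop_unit_comp[OF comp_hom[OF a t_hom]] d0_e_comp[OF a] by simp
  then show "e \<cdot> loop_mult \<cdot> u = e \<cdot> a"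
    using gcomp_id_right[OF e_comp_hom[OF a]] by simp
qed

lemma loop_mult_inv_left:
  assumes a: "hom C a T E" and u: "hom C u T PE" "pe \<cdot> u = loop_inv \<cdot> a" "qe \<cdot> u = a"
  shows "loop_mult \<cdot> u = loop_unit \<cdot> t \<cdot> a"
proof (rule loop_mult_cancel[OF u(1) comp_hom[OF comp_hom[OF a t_hom] loop_unit(1)]])
  have "e \<cdot> loop_mult \<cdot> u = (i \<cdot> e \<cdot> a) \<odot> (e \<cdot> a)"
    using e_loop_mult_pair[OF u] e_loop_inv_comp[OF a] by simp
  then show "e \<cdot> loop_mult \<cdot> u = e \<cdot> loop_unit \<cdot> t \<cdot> a"
    using gcomp_inv_left[OF e_comp_hom[OF a]] d0_e_comp[OF a] e_loop_unit_comp[OF comp_hom[OF a t_hom]]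
    by simp
qed

lemma loop_mult_inv_right:
  assumes a: "hom C a T E" and u: "hom C u T PE" "pe \<cdot> u = a" "qe \<cdot> u = loop_inv \<cdot> a"
  shows "loop_mult \<cdot> u = loop_unit \<cdot> t \<cdot> a"
proof (rule loop_mult_cancel[OF u(1) comp_hom[OF comp_hom[OF a t_hom] loop_unit(1)]])
  have "e \<cdot> loop_mult \<cdot> u = (e \<cdot> a) \<odot> (i \<cdot> e \<cdot> a)"
    using e_loop_mult_pair[OF u] e_loop_inv_comp[OF a] by simp
  then show "e \<cdot> loop_mult \<cdot> u = e \<cdot> loop_unit \<cdot> t \<cdot> a"
    using gcomp_inv_right[OF e_comp_hom[OF a]] d1_e_comp[OF a] e_loop_unit_comp[OF comp_hom[OF a t_hom]]
    by simp
qed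

lemma loop_mult_units:
  assumes u: "hom C u X PE" "pe \<cdot> u = loop_unit" "qe \<cdot> u = loop_unit"
  shows "loop_mult \<cdot> u = loop_unit"
  using loop_mult_unit_left[OF loop_unit(1) u(1)] u t_loop_unit comp_id_right[OF loop_unit(1)] by simp

lemma loop_inv_unit: "loop_inv \<cdot> loop_unit = loop_unit"
proof (rule e_cancel[OF comp_hom[OF loop_unit(1) loop_inv(1)] loop_unit(1)])
  have "hom C (idt C X) X X"
    using comp_hom[OF s0_hom d0_hom] d0_s0 by simp
  then have "i \<cdot> s0 = s0"
    using inverse_identity comp_id_right[OF s0_hom] by metis
  then show "e \<cdot> loop_inv \<cdot> loop_unit = e \<cdot> loop_unit"
    using e_loop_inv_comp[OF loop_unit(1)] loop_unit(2) by simp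
qed

lemma loop_group: "internal_group_in_Pt C X E t loop_unit PE pe qe loop_mult loop_inv"
  unfolding internal_group_in_Pt_def is_point_def
  by (intro conjI allI impI)
    (fact t_hom loop_unit(1) t_loop_unit loop_pairs loop_mult(1) t_loop_mult loop_mult_units
      loop_inv(1) t_loop_inv loop_inv_unit loop_mult_assoc loop_mult_unit_left loop_mult_unit_right
      loop_mult_inv_left loop_mult_inv_right)+

end

theorem mainTheorem13:
  fixes C :: "('o, 'm) cat"
  assumes fc: "finitely_complete C"
    and grp: "\<And>X A f s P p q m i. X \<in> Obj C \<Longrightarrow>
                internal_group_in_Pt C X A f s P p q m i \<Longrightarrow> is_iso C f"
    and X: "X \<in> Obj C"
    and G: "refl_graph C X X1 d0 d1 s0"
    and gpd: "admits_groupoid_structure C X X1 d0 d1 s0"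
    and prod: "is_product C X X XX pr0 pr1"
    and r: "hom C r X1 XX" "cmp C pr0 r = d0" "cmp C pr1 r = d1"
  shows "is_mono C r"
proof -
  obtain P p q c i where groupoid: "groupoid_structure C X X1 d0 d1 s0 P p q c i"
    using gpd unfolding admits_groupoid_structure_def by blast
  interpret internal_groupoid C X X1 d0 d1 s0 P p q c i
    using fc groupoid unfolding finitely_complete_def
    by unfold_locales blast+
  obtain \<delta> where \<delta>: "hom C \<delta> X XX" "cmp C pr0 \<delta> = idt C X" "cmp C pr1 \<delta> = idt C X"
    using diagonal_exists[OF prod X] .
  obtain E e t where loop_pb: "is_pullback C r \<delta> E e t"
    using pullback_exists[OF fc r(1) \<delta>(1)] .
  have loops: "loop_object C X X1 d0 d1 E e t"
    using diagonal_pullback_loop_object[OF prod d0_hom r \<delta> loop_pb] .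
  obtain PE pe qe where "is_pullback C t t PE pe qe"
    using pullback_exists[OF fc] loops unfolding loop_object_def by metis
  then interpret groupoid_loops C X X1 d0 d1 s0 P p q c i E e t PE pe qe
    using loops by unfold_locales
  have "is_iso C t"
    using grp[OF X loop_group] .
  then show ?thesis
    using pairing_mono[OF prod r] parallel_eq_if_loops_trivial loops_trivial_if_iso by blast
qed

end
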